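(* Let $(X,d_X,\mu_X)$ be an mm-space with $X=\operatorname{supp}\mu_X$. Any measure $\mu\in\mathcal M(X;1)$ satisfying $\operatorname{diam}\operatorname{supp}\mu=\operatorname{diam}X<\infty$ is a maximal element of $\mathcal M(X;1)$ with respect to the Lipschitz order.
   Context: An mm-space is a triple $(X,d_X,\mu_X)$ where $(X,d_X)$ is a complete separable metric space and $\mu_X$ is a Borel probability measure on $X$. The 1-measurement is $\mathcal M(X;1):=\{f_*\mu_X \mid f:X\to\mathbb R \text{ is 1-Lipschitz}\}$, a set of Borel probability measures on $\mathbb R$. Two mm-spaces $X,Y$ are mm-isomorphic if there is an isometry $f:\operatorname{supp}\mu_X\to\operatorname{supp}\mu_Y$ with $f_*\mu_X=\mu_Y$. For mm-spaces $X,Y$, write $Y\prec X$ (Lipschitz order) if there is a 1-Lipschitz map $f:\operatorname{supp}\mu_X\to\operatorname{supp}\mu_Y$ with $f_*\mu_X=\mu_Y$; this is a partial order on mm-isomorphism classes. For Borel probability measures $\mu,\nu$ on $\mathbb R$, $\mu\prec\nu$ means $(\mathbb R,|\cdot|,\mu)\prec(\mathbb R,|\cdot|,\nu)$. An element $\mu\in\mathcal M(X;1)$ is maximal if every $\nu\in\mathcal M(X;1)$ with $\mu\prec\nu$ has $(\mathbb R,|\cdot|,\nu)$ mm-isomorphic to $(\mathbb R,|\cdot|,\mu)$. The diameter of a set $A$ is $\sup_{x,y\in A}d(x,y)$. *)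

theory Defs
  imports "HOL-Probability.Probability"
begin

text \<open>Support of a Borel measure on a separable metric space:
  the set of points all of whose open balls have positive measure
  (equivalently, the smallest closed set of full measure).\<close>
definition msupp :: "'a::metric_space measure \<Rightarrow> 'a set" where
  "msupp M = {x. \<forall>e>0. emeasure M (ball x e) > 0}"

definition measurement1 :: "'a::metric_space measure \<Rightarrow> real measure set" where
  "measurement1 M = {distr M borel f | f. 1-lipschitz_on UNIV f}"

text \<open>Lipschitz order on Borel probability measures on the real line:
  lip_le mu nu means (R,|.|,mu) \<prec> (R,|.|,nu), i.e. there is a 1-Lipschitz map
  f : supp nu \<rightarrow> supp mu with f_* nu = mu.\<close>
definition lip_le :: "real measure \<Rightarrow> real measure \<Rightarrow> bool" where
  "lip_le mu nu \<longleftrightarrow> (\<exists>f. 1-lipschitz_on (msupp nu) f \<and> f ` msupp nu \<subseteq> msupp mu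
      \<and> distr (restrict_space nu (msupp nu)) borel f = mu)"

definition mm_iso_real :: "real measure \<Rightarrow> real measure \<Rightarrow> bool" where
  "mm_iso_real mu nu \<longleftrightarrow> (\<exists>f. (\<forall>x\<in>msupp mu. \<forall>y\<in>msupp mu. dist (f x) (f y) = dist x y)
      \<and> f ` msupp mu = msupp nu
      \<and> distr (restrict_space mu (msupp mu)) borel f = nu)"

definition maximal_in_measurement1 :: "'a::metric_space measure \<Rightarrow> real measure \<Rightarrow> bool" where
  "maximal_in_measurement1 M mu \<longleftrightarrow> mu \<in> measurement1 M \<and>
     (\<forall>nu\<in>measurement1 M. lip_le mu nu \<longrightarrow> mm_iso_real nu mu)"

end

theory Submission
  imports Defs
begin

text \<open>If \<open>mu \<prec> nu\<close> via a 1-Lipschitz map \<open>f\<close>, then \<open>f\<close> maps the compact set \<open>supp nu\<close>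
  onto \<open>supp mu\<close>, and \<open>diam supp nu \<le> diam X = diam supp mu\<close>. On the real line a 1-Lipschitz map
  whose image is at least as wide as its domain is an isometry: if it attains its minimum at
  \<open>a\<close> and its maximum at \<open>b\<close>, then \<open>|a - b|\<close> is the diameter of the domain, every other point
  lies between \<open>a\<close> and \<open>b\<close>, and the map is a translate of the distance from \<open>a\<close>.\<close>

lemma msupp_closed:
  fixes N :: "'a::metric_space measure"
  assumes "sets N = sets borel"
  shows "closed (msupp N)"
  unfolding closed_def open_contains_ball
proof
  fix x assume "x \<in> - msupp N"
  then obtain e where "e > 0" and null: "emeasure N (ball x e) = 0"
    unfolding msupp_def by (auto simp: not_gr_zero)
  have "y \<notin> msupp N" if "y \<in> ball x e" for y
  proof -
    have "ball y (e - dist x y) \<subseteq> ball x e"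
      by (smt (verit) dist_commute dist_triangle mem_ball subsetI)
    then have "emeasure N (ball y (e - dist x y)) = 0"
      using null emeasure_mono[of "ball y (e - dist x y)" "ball x e" N] assms by simp
    moreover have "e - dist x y > 0" using that by simp
    ultimately show ?thesis unfolding msupp_def by (metis (mono_tags, lifting) less_irrefl mem_Collect_eq)
  qed
  then show "\<exists>e>0. ball x e \<subseteq> - msupp N" using \<open>e > 0\<close> by blast
qed

lemma msupp_distr_subset_closure:
  fixes N :: "'a measure" and f :: "'a \<Rightarrow> 'b::metric_space"
  assumes "f \<in> borel_measurable N"
  shows "msupp (distr N borel f) \<subseteq> closure (f ` space N)"
proof
  fix y assume y: "y \<in> msupp (distr N borel f)"
  show "y \<in> closure (f ` space N)"
    unfolding closure_approachable
  proof (intro allI impI)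
    fix e :: real assume "e > 0"
    with y have "emeasure N (f -` ball y e \<inter> space N) > 0"
      unfolding msupp_def by (simp add: emeasure_distr[OF assms])
    then have "f -` ball y e \<inter> space N \<noteq> {}" by auto
    then obtain x where "x \<in> space N" "f x \<in> ball y e" by blast
    then show "\<exists>z\<in>f ` space N. dist z y < e" by (auto simp: dist_commute)
  qed
qed

lemma bounded_lipschitz_image:
  assumes "C-lipschitz_on S f" "bounded S"
  shows "bounded (f ` S)"
proof (cases "S = {}")
  case False
  then obtain x0 where "x0 \<in> S" by blast
  obtain e where e: "\<forall>y\<in>S. dist x0 y \<le> e"
    using bounded_any_center assms(2) by blast
  have "dist (f x0) (f y) \<le> C * e" if "y \<in> S" for y
  proof -
    have "dist (f x0) (f y) \<le> C * dist x0 y"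
      using lipschitz_onD[OF assms(1) \<open>x0 \<in> S\<close> that] .
    also have "\<dots> \<le> C * e"
      using e that lipschitz_on_nonneg[OF assms(1)] by (simp add: mult_left_mono)
    finally show ?thesis .
  qed
  then show ?thesis unfolding bounded_def by blast
qed simp
lemma diameter_lipschitz_image_le:
  assumes "C-lipschitz_on S f" "bounded S"
  shows "diameter (f ` S) \<le> C * diameter S"
proof (cases "S = {}")
  case False
  have "dist (f x) (f y) \<le> C * diameter S" if "x \<in> S" "y \<in> S" for x y
    using lipschitz_onD[OF assms(1) that] diameter_bounded_bound[OF assms(2) that]
      lipschitz_on_nonneg[OF assms(1)] mult_left_mono order_trans by blast
  then show ?thesis
    using False unfolding diameter_def by (auto intro!: cSUP_least)
qed simp

lemma lipschitz_on_real_isometry_if_diameter_le: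
  fixes S :: "real set" and f :: "real \<Rightarrow> real"
  assumes "compact S" and lip: "1-lipschitz_on S f"
    and diam: "diameter S \<le> diameter (f ` S)"
    and "x \<in> S" "y \<in> S"
  shows "dist (f x) (f y) = dist x y"
proof -
  have cont: "continuous_on S f" using lip lipschitz_on_continuous_on by blast
  obtain a where a: "a \<in> S" "\<forall>z\<in>S. f a \<le> f z"
    using continuous_attains_inf[OF \<open>compact S\<close> _ cont] \<open>x \<in> S\<close> by blast
  obtain b where b: "b \<in> S" "\<forall>z\<in>S. f z \<le> f b"
    using continuous_attains_sup[OF \<open>compact S\<close> _ cont] \<open>x \<in> S\<close> by blast
  have f_dist: "\<bar>f z - f w\<bar> \<le> \<bar>z - w\<bar>" if "z \<in> S" "w \<in> S" for z w
    using lipschitz_onD[OF lip that] by (simp add: dist_real_def)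
  have S_dist: "\<bar>z - w\<bar> \<le> diameter S" if "z \<in> S" "w \<in> S" for z w
    using diameter_bounded_bound[OF compact_imp_bounded[OF \<open>compact S\<close>] that]
    by (simp add: dist_real_def)
  have "diameter (f ` S) \<le> f b - f a"
    using a b by (intro diameter_le) (auto simp: abs_le_iff intro!: diff_mono)
  then have ab: "f b - f a = \<bar>a - b\<bar>" "diameter S = \<bar>a - b\<bar>"
    using diam f_dist[OF b(1) a(1)] S_dist[OF a(1) b(1)] by auto
  have between: "f z = f a + \<bar>z - a\<bar> \<and> min a b \<le> z \<and> z \<le> max a b" if "z \<in> S" for z
  proof -
    have "\<bar>z - a\<bar> \<le> \<bar>a - b\<bar>" "\<bar>z - b\<bar> \<le> \<bar>a - b\<bar>"
      using S_dist[OF that a(1)] S_dist[OF that b(1)] ab(2) by auto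
    moreover have "\<bar>f z - f a\<bar> \<le> \<bar>z - a\<bar>" "\<bar>f z - f b\<bar> \<le> \<bar>z - b\<bar>"
      using f_dist[OF that a(1)] f_dist[OF that b(1)] .
    moreover have "f a \<le> f z" "f z \<le> f b" using a(2) b(2) that by auto
    ultimately show ?thesis using ab(1) by linarith
  qed
  show ?thesis
    using between[OF \<open>x \<in> S\<close>] between[OF \<open>y \<in> S\<close>] unfolding dist_real_def by linarith
qed
lemma msupp_measurement1:
  fixes M :: "'a::metric_space measure"
  assumes "sets M = sets borel" "bounded (UNIV :: 'a set)" "nu \<in> measurement1 M"
  shows "sets nu = sets borel" "bounded (msupp nu)" "diameter (msupp nu) \<le> diameter (UNIV :: 'a set)"
proof -
  obtain h where h: "1-lipschitz_on UNIV h" "nu = distr M borel h"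
    using assms(3) unfolding measurement1_def by auto
  show "sets nu = sets borel" using h(2) by simp
  have "h \<in> borel_measurable M"
    using borel_measurable_continuous_onI[OF lipschitz_on_continuous_on[OF h(1)]]
      measurable_cong_sets[OF assms(1) refl] by blast
  then have supp: "msupp nu \<subseteq> closure (range h)"
    using msupp_distr_subset_closure h(2) sets_eq_imp_space_eq[OF assms(1)] by (metis space_borel)
  have bdd: "bounded (range h)" using bounded_lipschitz_image[OF h(1) assms(2)] .
  then show "bounded (msupp nu)" using supp bounded_closure bounded_subset by blast
  have "diameter (msupp nu) \<le> diameter (range h)"
    using diameter_subset[OF supp bounded_closure[OF bdd]] diameter_closure[OF bdd] by simp
  also have "\<dots> \<le> diameter (UNIV :: 'a set)"
    using diameter_lipschitz_image_le[OF h(1) assms(2)] by simp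
  finally show "diameter (msupp nu) \<le> diameter (UNIV :: 'a set)" .
qed

theorem proposition1p2:
  fixes M :: "'a::polish_space measure" and mu :: "real measure"
  assumes "prob_space M" and "sets M = sets borel"
    and "msupp M = UNIV"
    and "mu \<in> measurement1 M"
    and "bounded (UNIV :: 'a set)"
    and "diameter (msupp mu) = diameter (UNIV :: 'a set)"
  shows "maximal_in_measurement1 M mu"
  unfolding maximal_in_measurement1_def
proof (intro conjI ballI impI)
  fix nu assume nu: "nu \<in> measurement1 M" and "lip_le mu nu"
  then obtain f where f: "1-lipschitz_on (msupp nu) f" "f ` msupp nu \<subseteq> msupp mu"
      "distr (restrict_space nu (msupp nu)) borel f = mu"
    unfolding lip_le_def by auto
  note supp_nu = msupp_measurement1[OF assms(2,5) nu]
  have compact: "compact (msupp nu)"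
    using supp_nu msupp_closed compact_eq_bounded_closed by blast
  have "f \<in> borel_measurable (restrict_space nu (msupp nu))"
    using borel_measurable_continuous_on_restrict[OF lipschitz_on_continuous_on[OF f(1)]]
      measurable_cong_sets[OF sets_restrict_space_cong[OF supp_nu(1)] refl] by blast
  moreover have "space (restrict_space nu (msupp nu)) = msupp nu"
    using sets_eq_imp_space_eq[OF supp_nu(1)] by (simp add: space_restrict_space)
  ultimately have "msupp mu \<subseteq> closure (f ` msupp nu)"
    using msupp_distr_subset_closure f(3) by metis
  also have "\<dots> = f ` msupp nu"
    using compact_continuous_image[OF lipschitz_on_continuous_on[OF f(1)] compact]
    by (simp add: compact_imp_closed)
  finally have onto: "f ` msupp nu = msupp mu" using f(2) by blast
  have "diameter (msupp nu) \<le> diameter (f ` msupp nu)"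
    using supp_nu(3) onto assms(6) by simp
  then have "\<forall>x\<in>msupp nu. \<forall>y\<in>msupp nu. dist (f x) (f y) = dist x y"
    using lipschitz_on_real_isometry_if_diameter_le[OF compact f(1)] by blast
  then show "mm_iso_real nu mu" unfolding mm_iso_real_def using onto f(3) by blast
qed (rule assms(4))

end
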